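(* Let $0<\epsilon<\epsilon'<1$, $g\in\Lambda^{\epsilon'}_{I}G_{\tau}\subset\Lambda^{\epsilon}_{I}G_{\tau}$ and $h\in\Lambda^{\epsilon}_{E}G_{\tau}\subset\Lambda^{\epsilon'}_{E}G_{\tau}$. Then \[ g\#_{\epsilon'}h=g\#_{\epsilon}h\in\Lambda^{\epsilon}_{E}G_{\tau}. \]
   Context: Setting: $G$ compact semisimple Lie group, complexification $G^{\mathbb C}$, bar = Cartan involution fixing $G$; $\tau$ an automorphism of $G$ of finite order $k\ge2$ with fixed subgroup $K$; $\omega=e^{2\pi i/k}$; $K^{\mathbb C}=KB$ an Iwasawa decomposition, $B$ solvable. For $0<\epsilon<1$: $C^{(\epsilon)}=\{|\lambda|=\epsilon\}\cup\{|\lambda|=1/\epsilon\}$, $I^{(\epsilon)}=\{|\lambda|<\epsilon\}\cup\{|\lambda|>1/\epsilon\}\cup\{\infty\}$, $E^{(\epsilon)}=\{\epsilon<|\lambda|<1/\epsilon\}$. $\Lambda^\epsilon G_\tau$: smooth $g:C^{(\epsilon)}\to G^{\mathbb C}$ with $g(\omega\lambda)=\tau g(\lambda)$, $\overline{g(\lambda)}=g(1/\bar\lambda)$; $\Lambda^\epsilon_EG_\tau$, $\Lambda^\epsilon_IG_\tau$: those extending holomorphically to $E^{(\epsilon)}$, resp. $I^{(\epsilon)}$; $\Lambda^\epsilon_{I,B}G_\tau$: those in $\Lambda^\epsilon_IG_\tau$ with $g(0)\in B$. Every $h\in\Lambda^\epsilon G_\tau$ factors uniquely as $h=h_Eh_I$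 with $h_E\in\Lambda^\epsilon_EG_\tau$, $h_I\in\Lambda^\epsilon_{I,B}G_\tau$; the dressing action is $g\#_\epsilon h=(gh)_E$ for $g\in\Lambda^\epsilon_IG_\tau$, $h\in\Lambda^\epsilon_EG_\tau$. The inclusions $\Lambda^{\epsilon'}_IG_\tau\subset\Lambda^\epsilon_IG_\tau$ and $\Lambda^\epsilon_EG_\tau\subset\Lambda^{\epsilon'}_EG_\tau$ for $\epsilon<\epsilon'$ are given by restricting holomorphic extensions. *)

theory Defs
  imports "HOL-Analysis.Analysis"
begin

type_synonym 'n cmat = "complex^'n^'n"

text \<open>Conjugate transpose, and the Cartan involution bar X = (X^*)^(-1) fixing
  the compact real form G = Gc \<inter> U(n).\<close>
definition ctrans :: "'n::finite cmat \<Rightarrow> 'n cmat" where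
  "ctrans X = (\<chi> i j. cnj (X $ j $ i))"

definition cbar :: "'n::finite cmat \<Rightarrow> 'n cmat" where
  "cbar X = matrix_inv (ctrans X)"

definition is_mgroup :: "'n::finite cmat set \<Rightarrow> bool" where
  "is_mgroup H \<longleftrightarrow> mat 1 \<in> H \<and> (\<forall>X\<in>H. invertible X) \<and>
     (\<forall>X\<in>H. \<forall>Y\<in>H. X ** Y \<in> H) \<and> (\<forall>X\<in>H. matrix_inv X \<in> H)"

definition subgrp_gen :: "'n::finite cmat set \<Rightarrow> 'n cmat set" where
  "subgrp_gen S = \<Inter>{H. mat 1 \<in> H \<and> (\<forall>X\<in>H. \<forall>Y\<in>H. X ** Y \<in> H)
                        \<and> (\<forall>X\<in>H. matrix_inv X \<in> H) \<and> S \<subseteq> H}"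

definition derived :: "'n::finite cmat set \<Rightarrow> 'n cmat set" where
  "derived H = subgrp_gen {X ** Y ** matrix_inv X ** matrix_inv Y | X Y. X \<in> H \<and> Y \<in> H}"

definition solvable_mgroup :: "'n::finite cmat set \<Rightarrow> bool" where
  "solvable_mgroup H \<longleftrightarrow> is_mgroup H \<and> (\<exists>m. (derived ^^ m) H = {mat 1})"

definition realform :: "'n::finite cmat set \<Rightarrow> 'n cmat set" where
  "realform Gc = {X \<in> Gc. cbar X = X}"

definition fixgrp :: "'n::finite cmat set \<Rightarrow> ('n cmat \<Rightarrow> 'n cmat) \<Rightarrow> 'n cmat set" where
  "fixgrp H tau = {X \<in> H. tau X = X}"

text \<open>Standing setting: Gc (= G^C) a closed matrix group stable under conjugate
  transposition; tau a continuous automorphism of Gc of order exactly k \<ge> 2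
  commuting with bar (so it restricts to an automorphism of G); B a solvable
  subgroup of K^C = (Gc)^tau with K^C = K B, K \<inter> B = {1} (Iwasawa decomposition).\<close>
definition twisted_setting ::
  "'n::finite cmat set \<Rightarrow> ('n cmat \<Rightarrow> 'n cmat) \<Rightarrow> nat \<Rightarrow> 'n cmat set \<Rightarrow> bool" where
  "twisted_setting Gc tau k B \<longleftrightarrow>
     is_mgroup Gc \<and> closed Gc \<and> (\<forall>X\<in>Gc. ctrans X \<in> Gc) \<and>
     2 \<le> k \<and>
     bij_betw tau Gc Gc \<and> (\<forall>X\<in>Gc. \<forall>Y\<in>Gc. tau (X ** Y) = tau X ** tau Y) \<and>
     continuous_on Gc tau \<and>
     (\<forall>X\<in>Gc. tau (cbar X) = cbar (tau X)) \<and>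
     (\<forall>X\<in>Gc. (tau ^^ k) X = X) \<and>
     (\<forall>j. 0 < j \<and> j < k \<longrightarrow> (\<exists>X\<in>realform Gc. (tau ^^ j) X \<noteq> X)) \<and>
     solvable_mgroup B \<and> B \<subseteq> fixgrp Gc tau \<and>
     fixgrp Gc tau = {X ** Y | X Y. X \<in> fixgrp (realform Gc) tau \<and> Y \<in> B} \<and>
     fixgrp (realform Gc) tau \<inter> B = {mat 1}"

definition omega :: "nat \<Rightarrow> complex" where
  "omega k = exp (2 * pi * \<i> / of_nat k)"

definition Ccirc :: "real \<Rightarrow> complex set" where
  "Ccirc e = {z. norm z = e} \<union> {z. norm z = 1 / e}"

definition Eann :: "real \<Rightarrow> complex set" where
  "Eann e = {z. e < norm z \<and> norm z < 1 / e}"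

definition Eclos :: "real \<Rightarrow> complex set" where
  "Eclos e = {z. e \<le> norm z \<and> norm z \<le> 1 / e}"

definition smooth_real :: "(real \<Rightarrow> 'a::real_normed_vector) \<Rightarrow> bool" where
  "smooth_real f \<longleftrightarrow> (\<exists>D. D 0 = f \<and> (\<forall>m t. (D m has_vector_derivative D (Suc m) t) (at t)))"

definition smooth_on_circles :: "real \<Rightarrow> (complex \<Rightarrow> 'n::finite cmat) \<Rightarrow> bool" where
  "smooth_on_circles e g \<longleftrightarrow>
     smooth_real (\<lambda>t. g (of_real e * cis t)) \<and> smooth_real (\<lambda>t. g (of_real (1/e) * cis t))"

definition mholo :: "(complex \<Rightarrow> 'n::finite cmat) \<Rightarrow> complex set \<Rightarrow> bool" where
  "mholo F S \<longleftrightarrow> (\<forall>i j. (\<lambda>z. F z $ i $ j) holomorphic_on S)"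

text \<open>A loop is represented by a function on \<complex>; only its values on C^(e) matter.\<close>
definition Lam ::
  "'n::finite cmat set \<Rightarrow> ('n cmat \<Rightarrow> 'n cmat) \<Rightarrow> nat \<Rightarrow> real \<Rightarrow> (complex \<Rightarrow> 'n cmat) set" where
  "Lam Gc tau k e = {g. (\<forall>z\<in>Ccirc e. g z \<in> Gc) \<and> smooth_on_circles e g \<and>
       (\<forall>z\<in>Ccirc e. g (omega k * z) = tau (g z)) \<and>
       (\<forall>z\<in>Ccirc e. cbar (g z) = g (1 / cnj z))}"

definition EExt ::
  "'n::finite cmat set \<Rightarrow> ('n cmat \<Rightarrow> 'n cmat) \<Rightarrow> nat \<Rightarrow> real \<Rightarrow>
     (complex \<Rightarrow> 'n cmat) \<Rightarrow> (complex \<Rightarrow> 'n cmat) \<Rightarrow> bool" where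
  "EExt Gc tau k e g F \<longleftrightarrow>
     mholo F (Eann e) \<and> continuous_on (Eclos e) F \<and> (\<forall>z\<in>Ccirc e. F z = g z) \<and>
     (\<forall>z\<in>Eclos e. F z \<in> Gc) \<and>
     (\<forall>z\<in>Eclos e. F (omega k * z) = tau (F z)) \<and>
     (\<forall>z\<in>Eclos e. cbar (F z) = F (1 / cnj z))"

text \<open>F together with the value Finf at \<infinity> is a holomorphic extension of g to
  I^(e) = {|z|<e} \<union> {|z|>1/e} \<union> {\<infinity>}; holomorphy at \<infinity> is expressed via the
  chart \<mu> \<mapsto> 1/\<mu>.\<close>
definition at_inf_chart :: "(complex \<Rightarrow> 'n::finite cmat) \<Rightarrow> 'n cmat \<Rightarrow> complex \<Rightarrow> 'n cmat" where
  "at_inf_chart F Finf = (\<lambda>\<mu>. if \<mu> = 0 then Finf else F (1 / \<mu>))"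

definition IExt ::
  "'n::finite cmat set \<Rightarrow> ('n cmat \<Rightarrow> 'n cmat) \<Rightarrow> nat \<Rightarrow> real \<Rightarrow>
     (complex \<Rightarrow> 'n cmat) \<Rightarrow> (complex \<Rightarrow> 'n cmat) \<Rightarrow> 'n cmat \<Rightarrow> bool" where
  "IExt Gc tau k e g F Finf \<longleftrightarrow>
     mholo F (ball 0 e) \<and> continuous_on (cball 0 e) F \<and>
     mholo (at_inf_chart F Finf) (ball 0 e) \<and> continuous_on (cball 0 e) (at_inf_chart F Finf) \<and>
     (\<forall>z\<in>Ccirc e. F z = g z) \<and>
     (\<forall>z\<in>cball 0 e. F z \<in> Gc \<and> at_inf_chart F Finf z \<in> Gc) \<and>
     (\<forall>z\<in>cball 0 e. F (omega k * z) = tau (F z) \<and>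
         at_inf_chart F Finf (z / omega k) = tau (at_inf_chart F Finf z)) \<and>
     (\<forall>z\<in>cball 0 e. cbar (F z) = at_inf_chart F Finf (cnj z))"

definition LamE :: "'n::finite cmat set \<Rightarrow> ('n cmat \<Rightarrow> 'n cmat) \<Rightarrow> nat \<Rightarrow> real \<Rightarrow> (complex \<Rightarrow> 'n cmat) set" where
  "LamE Gc tau k e = {g \<in> Lam Gc tau k e. \<exists>F. EExt Gc tau k e g F}"

definition LamI :: "'n::finite cmat set \<Rightarrow> ('n cmat \<Rightarrow> 'n cmat) \<Rightarrow> nat \<Rightarrow> real \<Rightarrow> (complex \<Rightarrow> 'n cmat) set" where
  "LamI Gc tau k e = {g \<in> Lam Gc tau k e. \<exists>F Finf. IExt Gc tau k e g F Finf}"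

definition LamIB ::
  "'n::finite cmat set \<Rightarrow> ('n cmat \<Rightarrow> 'n cmat) \<Rightarrow> nat \<Rightarrow> 'n cmat set \<Rightarrow> real \<Rightarrow> (complex \<Rightarrow> 'n cmat) set" where
  "LamIB Gc tau k B e = {g \<in> Lam Gc tau k e. \<exists>F Finf. IExt Gc tau k e g F Finf \<and> F 0 \<in> B}"

definition unique_factorization ::
  "'n::finite cmat set \<Rightarrow> ('n cmat \<Rightarrow> 'n cmat) \<Rightarrow> nat \<Rightarrow> 'n cmat set \<Rightarrow> bool" where
  "unique_factorization Gc tau k B \<longleftrightarrow>
    (\<forall>e. 0 < e \<and> e < 1 \<longrightarrow>
      (\<forall>h\<in>Lam Gc tau k e.
         (\<exists>hE\<in>LamE Gc tau k e. \<exists>hI\<in>LamIB Gc tau k B e. \<forall>z\<in>Ccirc e. h z = hE z ** hI z) \<and>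
         (\<forall>hE\<in>LamE Gc tau k e. \<forall>hI\<in>LamIB Gc tau k B e.
          \<forall>hE'\<in>LamE Gc tau k e. \<forall>hI'\<in>LamIB Gc tau k B e.
            (\<forall>z\<in>Ccirc e. h z = hE z ** hI z) \<longrightarrow> (\<forall>z\<in>Ccirc e. h z = hE' z ** hI' z) \<longrightarrow>
            (\<forall>z\<in>Ccirc e. hE z = hE' z \<and> hI z = hI' z))))"

text \<open>Dressing action g #_e h = (g h)_E, normalised to 0 off C^(e) so that it is
  a well-defined function.\<close>
definition dress ::
  "'n::finite cmat set \<Rightarrow> ('n cmat \<Rightarrow> 'n cmat) \<Rightarrow> nat \<Rightarrow> 'n cmat set \<Rightarrow> real \<Rightarrow>
     (complex \<Rightarrow> 'n cmat) \<Rightarrow> (complex \<Rightarrow> 'n cmat) \<Rightarrow> (complex \<Rightarrow> 'n cmat)" where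
  "dress Gc tau k B e g h = (THE kE. kE \<in> LamE Gc tau k e \<and> (\<forall>z. z \<notin> Ccirc e \<longrightarrow> kE z = 0) \<and>
       (\<exists>kI\<in>LamIB Gc tau k B e. \<forall>z\<in>Ccirc e. g z ** h z = kE z ** kI z))"

end

theory Submission
  imports Defs "HOL-Complex_Analysis.Complex_Analysis"
begin

text \<open>Write \<open>gx h = D kI\<close> on \<open>C^(e)\<close>, where \<open>gx\<close> is the holomorphic extension of \<open>g\<close>
  and \<open>D = gx #_e h\<close>, and let \<open>KE\<close>, \<open>KI\<close> be the holomorphic extensions of \<open>D\<close> and \<open>kI\<close>.
  The loop \<open>Q = KE^-1 gx hx\<close> is holomorphic on the two thin annuli between \<open>C^(e)\<close> and
  \<open>C^(e')\<close>, where all three factors are, and it coincides with \<open>KI\<close> on \<open>C^(e)\<close>. Patching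
  \<open>KI\<close> and \<open>Q\<close> together across \<open>C^(e)\<close> therefore gives an element \<open>hI\<close> of the group
  \<open>Lambda^(e')_{I,B}\<close> with \<open>g hx = KE hI\<close> on \<open>C^(e')\<close>. As \<open>KE\<close> restricts to an element of
  \<open>Lambda^(e')_E\<close>, uniqueness of the factorization on \<open>C^(e')\<close> gives \<open>g #_e' hx = KE\<close>.\<close>

section \<open>Smooth functions of a real variable\<close>

lemma smooth_real_const: "smooth_real (\<lambda>t. c)"
  unfolding smooth_real_def
  by (rule exI[of _ "\<lambda>m. if m = 0 then (\<lambda>t. c) else (\<lambda>t. 0)"]) auto

lemma smooth_real_add:
  assumes "smooth_real f" "smooth_real g"
  shows "smooth_real (\<lambda>t. f t + g t)"
proof -
  obtain Df where f: "Df 0 = f" "\<And>m t. (Df m has_vector_derivative Df (Suc m) t) (at t)"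
    using assms(1) unfolding smooth_real_def by blast
  obtain Dg where g: "Dg 0 = g" "\<And>m t. (Dg m has_vector_derivative Dg (Suc m) t) (at t)"
    using assms(2) unfolding smooth_real_def by blast
  show ?thesis unfolding smooth_real_def
    by (rule exI[of _ "\<lambda>m t. Df m t + Dg m t"]) (auto simp: f g intro!: has_vector_derivative_add)
qed

lemma smooth_real_sum:
  assumes "finite I" "\<And>i. i \<in> I \<Longrightarrow> smooth_real (f i)"
  shows "smooth_real (\<lambda>t. \<Sum>i\<in>I. f i t)"
  using assms by (induction I rule: finite_induct) (auto intro: smooth_real_const smooth_real_add)

lemma smooth_real_bounded_linear:
  assumes "smooth_real f" "bounded_linear L"
  shows "smooth_real (\<lambda>t. L (f t))"
proof -
  obtain Df where f: "Df 0 = f" "\<And>m t. (Df m has_vector_derivative Df (Suc m) t) (at t)"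
    using assms(1) unfolding smooth_real_def by blast
  show ?thesis unfolding smooth_real_def
    by (rule exI[of _ "\<lambda>m t. L (Df m t)"])
      (auto simp: f intro!: bounded_linear.has_vector_derivative[OF assms(2)])
qed

text \<open>The derivatives of a product are given by the Leibniz rule.\<close>

lemma smooth_real_mult:
  fixes f g :: "real \<Rightarrow> 'a::real_normed_field"
  assumes "smooth_real f" "smooth_real g"
  shows "smooth_real (\<lambda>t. f t * g t)"
proof -
  obtain Df where f: "Df 0 = f" "\<And>m t. (Df m has_vector_derivative Df (Suc m) t) (at t)"
    using assms(1) unfolding smooth_real_def by blast
  obtain Dg where g: "Dg 0 = g" "\<And>m t. (Dg m has_vector_derivative Dg (Suc m) t) (at t)"
    using assms(2) unfolding smooth_real_def by blast
  define D where "D m t = (\<Sum>i = 0..m. of_nat (m choose i) * Df i t * Dg (m - i) t)" for m t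
  have "(D n has_vector_derivative D (Suc n) t) (at t)" for n t
  proof -
    have "(D n has_vector_derivative (\<Sum>i = 0..n. of_nat (n choose i) *
        (Df i t * Dg (Suc (n - i)) t + Df (Suc i) t * Dg (n - i) t))) (at t)"
      unfolding D_def mult.assoc
      by (intro has_vector_derivative_sum has_vector_derivative_mult_right
          has_vector_derivative_mult f(2) g(2))
    also have "(\<Sum>i = 0..n. of_nat (n choose i) *
        (Df i t * Dg (Suc (n - i)) t + Df (Suc i) t * Dg (n - i) t)) = D (Suc n) t"
      unfolding D_def
      apply (simp add: Suc_choose algebra_simps sum.distrib)
      apply (subst (4) sum_Suc_reindex)
      apply (auto simp: algebra_simps Suc_diff_le intro!: sum.cong)
      done
    finally show ?thesis .
  qed
  moreover have "D 0 = (\<lambda>t. f t * g t)" by (auto simp: D_def f g)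
  ultimately show ?thesis unfolding smooth_real_def by blast
qed

lemma has_vector_derivative_vec_lambda:
  fixes f :: "real \<Rightarrow> 'a::real_normed_vector ^ 'n::finite"
  assumes "\<And>i. ((\<lambda>t. f t $ i) has_vector_derivative f' $ i) (at t)"
  shows "(f has_vector_derivative f') (at t)"
proof -
  have "((\<lambda>y. (f y $ i - f t $ i - (y - t) *\<^sub>R f' $ i) /\<^sub>R \<bar>y - t\<bar>) \<longlongrightarrow> 0) (at t)" for i
    using assms[of i] unfolding has_vector_derivative_def has_derivative_at_within by simp
  then have "((\<lambda>y. \<chi> i. (f y $ i - f t $ i - (y - t) *\<^sub>R f' $ i) /\<^sub>R \<bar>y - t\<bar>) \<longlongrightarrow> (\<chi> i. 0)) (at t)"
    by (intro tendsto_vec_lambda) auto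
  moreover have "(\<lambda>y. \<chi> i. (f y $ i - f t $ i - (y - t) *\<^sub>R f' $ i) /\<^sub>R \<bar>y - t\<bar>)
     = (\<lambda>y. (f y - f t - (y - t) *\<^sub>R f') /\<^sub>R \<bar>y - t\<bar>)"
    by (auto simp: vec_eq_iff)
  ultimately show ?thesis
    unfolding has_vector_derivative_def has_derivative_at_within
    by (auto simp: bounded_linear_scaleR_left zero_vec_def)
qed

lemma smooth_real_vec_lambda:
  fixes f :: "real \<Rightarrow> 'a::real_normed_vector ^ 'n::finite"
  assumes "\<And>i. smooth_real (\<lambda>t. f t $ i)"
  shows "smooth_real f"
proof -
  obtain D where D: "\<And>i. D i 0 = (\<lambda>t. f t $ i)"
    "\<And>i m t. (D i m has_vector_derivative D i (Suc m) t) (at t)"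
    using assms unfolding smooth_real_def by metis
  show ?thesis unfolding smooth_real_def
  proof (rule exI[of _ "\<lambda>m t. \<chi> i. D i m t"], intro conjI allI)
    show "(\<lambda>t. \<chi> i. D i 0 t) = f" using D by (auto simp: vec_eq_iff)
    fix m t show "((\<lambda>t. \<chi> i. D i m t) has_vector_derivative (\<chi> i. D i (Suc m) t)) (at t)"
      by (rule has_vector_derivative_vec_lambda) (use D in simp)
  qed
qed

lemma smooth_real_vec_nth:
  fixes f :: "real \<Rightarrow> 'a::real_normed_vector ^ 'n::finite"
  shows "smooth_real f \<Longrightarrow> smooth_real (\<lambda>t. f t $ i)"
  using smooth_real_bounded_linear[OF _ bounded_linear_vec_nth] .

lemma smooth_real_matrix_mult:
  fixes F G :: "real \<Rightarrow> complex^'n::finite^'n"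
  assumes "smooth_real F" "smooth_real G"
  shows "smooth_real (\<lambda>t. F t ** G t)"
  by (intro smooth_real_vec_lambda)
    (auto simp: matrix_matrix_mult_def intro!: smooth_real_sum smooth_real_mult smooth_real_vec_nth assms)

lemma smooth_real_ctrans:
  fixes F :: "real \<Rightarrow> complex^'n::finite^'n"
  assumes "smooth_real F"
  shows "smooth_real (\<lambda>t. ctrans (F t))"
  by (intro smooth_real_vec_lambda)
    (auto simp: ctrans_def intro!: smooth_real_bounded_linear[OF _ bounded_linear_cnj]
      smooth_real_vec_nth assms)

text \<open>The \<open>m\<close>-th derivative of \<open>t \<mapsto> f (c cis t)\<close> is \<open>t \<mapsto> P m (c cis t)\<close>, where \<open>P\<close> iterates
  the holomorphic operator \<open>f \<mapsto> i w f'(w)\<close>.\<close>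

lemma smooth_real_holomorphic_on_circle:
  assumes "f holomorphic_on S" "open S" "\<And>t. c * cis t \<in> S"
  shows "smooth_real (\<lambda>t. f (c * cis t))"
proof -
  define P where "P m = ((\<lambda>g w. \<i> * w * deriv g w) ^^ m) f" for m
  have P0: "P 0 = f" and PS: "P (Suc m) = (\<lambda>w. \<i> * w * deriv (P m) w)" for m
    by (simp_all add: P_def)
  have hol: "P m holomorphic_on S" for m
    by (induction m) (auto simp: P0 PS intro!: holomorphic_intros holomorphic_deriv assms)
  have circle: "((\<lambda>t. c * cis t) has_vector_derivative (c * (\<i> * cis t))) (at t)" for t
  proof -
    have "((\<lambda>x. c * exp (\<i> * x)) has_field_derivative c * (\<i> * exp (\<i> * of_real t))) (at (of_real t))"
      by (auto intro!: derivative_eq_intros)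
    from has_vector_derivative_real_field[OF this] show ?thesis by (simp add: cis_conv_exp)
  qed
  have "((\<lambda>t. P m (c * cis t)) has_vector_derivative P (Suc m) (c * cis t)) (at t)" for m t
  proof -
    have "(P m has_field_derivative deriv (P m) (c * cis t)) (at (c * cis t))"
      using hol[of m] assms(2,3) holomorphic_derivI by blast
    from field_vector_diff_chain_at[OF circle this] show ?thesis
      by (simp add: PS o_def algebra_simps)
  qed
  then show ?thesis unfolding smooth_real_def
    by (intro exI[of _ "\<lambda>m t. P m (c * cis t)"]) (auto simp: P0)
qed

lemma smooth_real_mholo_on_circle:
  fixes F :: "complex \<Rightarrow> complex^'n::finite^'n"
  assumes "mholo F S" "open S" "\<And>t. c * cis t \<in> S"
  shows "smooth_real (\<lambda>t. F (c * cis t))"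
  by (intro smooth_real_vec_lambda smooth_real_holomorphic_on_circle[where S=S])
    (use assms in \<open>auto simp: mholo_def\<close>)

lemma matrix_inv_right: "invertible (A::'a::semiring_1^'n^'m) \<Longrightarrow> A ** matrix_inv A = mat 1"
  unfolding invertible_def matrix_inv_def by (rule someI2_ex) auto

lemma matrix_inv_left: "invertible (A::'a::semiring_1^'n^'m) \<Longrightarrow> matrix_inv A ** A = mat 1"
  unfolding invertible_def matrix_inv_def by (rule someI2_ex) auto

lemma matrix_inv_unique:
  fixes A B :: "'a::semiring_1^'n^'n"
  assumes "invertible A" "A ** B = mat 1"
  shows "matrix_inv A = B"
proof -
  have "matrix_inv A = matrix_inv A ** (A ** B)" by (simp add: assms)
  also have "\<dots> = B" by (simp only: matrix_mul_assoc matrix_inv_left[OF assms(1)] matrix_mul_lid)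
  finally show ?thesis .
qed

lemma invertible_matrix_inv: "invertible (A::'a::semiring_1^'n^'n) \<Longrightarrow> invertible (matrix_inv A)"
  using matrix_inv_left matrix_inv_right invertible_def by blast

lemma matrix_inv_matrix_inv: "invertible (A::'a::semiring_1^'n^'n) \<Longrightarrow> matrix_inv (matrix_inv A) = A"
  by (intro matrix_inv_unique invertible_matrix_inv matrix_inv_left)

lemma matrix_inv_mult:
  fixes A B :: "'a::semiring_1^'n^'n"
  assumes "invertible A" "invertible B"
  shows "matrix_inv (A ** B) = matrix_inv B ** matrix_inv A"
proof (rule matrix_inv_unique)
  show "invertible (A ** B)" using assms invertible_mult by blast
  have "A ** B ** (matrix_inv B ** matrix_inv A) = A ** (B ** matrix_inv B) ** matrix_inv A"
    by (simp add: matrix_mul_assoc)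
  then show "A ** B ** (matrix_inv B ** matrix_inv A) = mat 1" by (simp add: matrix_inv_right assms)
qed

lemma ctrans_mult: "ctrans (A ** B) = ctrans B ** ctrans (A::'n::finite cmat)"
  by (simp add: vec_eq_iff ctrans_def matrix_matrix_mult_def mult.commute)

lemma ctrans_ctrans [simp]: "ctrans (ctrans A) = (A::'n::finite cmat)"
  by (simp add: vec_eq_iff ctrans_def)

lemma ctrans_mat1 [simp]: "ctrans (mat 1) = (mat 1::'n::finite cmat)"
  by (simp add: vec_eq_iff ctrans_def mat_def)

lemma invertible_ctrans: "invertible (A::'n::finite cmat) \<Longrightarrow> invertible (ctrans A)"
  unfolding invertible_def by (metis ctrans_mult ctrans_mat1)

lemma matrix_inv_ctrans:
  assumes "invertible (A::'n::finite cmat)"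
  shows "matrix_inv (ctrans A) = ctrans (matrix_inv A)"
proof (rule matrix_inv_unique)
  show "invertible (ctrans A)" using assms by (rule invertible_ctrans)
  have "ctrans (matrix_inv A ** A) = mat 1" by (simp add: matrix_inv_left assms)
  then show "ctrans A ** ctrans (matrix_inv A) = mat 1" by (simp only: ctrans_mult)
qed

lemma cbar_cbar: "invertible (A::'n::finite cmat) \<Longrightarrow> cbar (cbar A) = A"
  unfolding cbar_def
  by (simp add: matrix_inv_ctrans invertible_matrix_inv matrix_inv_matrix_inv invertible_ctrans)

lemma cbar_mult:
  "invertible (A::'n::finite cmat) \<Longrightarrow> invertible B \<Longrightarrow> cbar (A ** B) = cbar A ** cbar B"
  unfolding cbar_def by (simp add: ctrans_mult matrix_inv_mult invertible_ctrans)

lemma cbar_matrix_inv: "invertible (A::'n::finite cmat) \<Longrightarrow> cbar (matrix_inv A) = matrix_inv (cbar A)"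
  unfolding cbar_def by (simp add: matrix_inv_ctrans invertible_matrix_inv invertible_ctrans)

lemma matrix_inv_eq_ctrans_cbar: "invertible (A::'n::finite cmat) \<Longrightarrow> matrix_inv A = ctrans (cbar A)"
  unfolding cbar_def by (simp add: matrix_inv_ctrans invertible_matrix_inv invertible_ctrans)

section \<open>Holomorphic matrix-valued functions\<close>

lemma continuous_on_matrix_entries:
  fixes F :: "'a::topological_space \<Rightarrow> complex^'n::finite^'n"
  assumes "\<And>i j. continuous_on S (\<lambda>z. F z $ i $ j)"
  shows "continuous_on S F"
proof -
  have "continuous_on S (\<lambda>z. \<chi> i. \<chi> j. F z $ i $ j)"
    by (intro continuous_on_vec_lambda assms)
  then show ?thesis by simp
qed

lemma continuous_on_matrix_mult:
  fixes F G :: "'a::topological_space \<Rightarrow> complex^'n::finite^'n"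
  shows "continuous_on S F \<Longrightarrow> continuous_on S G \<Longrightarrow> continuous_on S (\<lambda>z. F z ** G z)"
  unfolding matrix_matrix_mult_def
  by (intro continuous_on_matrix_entries) (auto intro!: continuous_intros)

lemma continuous_on_ctrans:
  fixes F :: "'a::topological_space \<Rightarrow> complex^'n::finite^'n"
  shows "continuous_on S F \<Longrightarrow> continuous_on S (\<lambda>z. ctrans (F z))"
  unfolding ctrans_def by (intro continuous_on_matrix_entries) (auto intro!: continuous_intros)

lemma mholo_mult: "mholo F S \<Longrightarrow> mholo G S \<Longrightarrow> mholo (\<lambda>z. F z ** G z) S"
  unfolding mholo_def matrix_matrix_mult_def by (auto intro!: holomorphic_intros)

lemma mholo_subset: "mholo F S \<Longrightarrow> T \<subseteq> S \<Longrightarrow> mholo F T"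
  unfolding mholo_def using holomorphic_on_subset by blast

lemma mholo_cong:
  assumes "mholo F S" "\<And>z. z \<in> S \<Longrightarrow> F z = G z"
  shows "mholo G S"
  using assms holomorphic_transform[of "\<lambda>z. F z $ _ $ _" S "\<lambda>z. G z $ _ $ _"]
  unfolding mholo_def by simp

lemma mholo_compose:
  "mholo F T \<Longrightarrow> g holomorphic_on S \<Longrightarrow> g ` S \<subseteq> T \<Longrightarrow> mholo (\<lambda>z. F (g z)) S"
  unfolding mholo_def using holomorphic_on_compose_gen[of g S _ T, unfolded o_def] by blast

lemma mholo_ctrans_cnj:
  assumes "mholo F T" "open S" "\<And>z. z \<in> S \<Longrightarrow> cnj z \<in> T"
  shows "mholo (\<lambda>z. ctrans (F (cnj z))) S"
  unfolding mholo_def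
proof (intro allI)
  fix i j
  have "(\<lambda>w. F w $ j $ i) holomorphic_on cnj ` S"
    using assms(1,3) unfolding mholo_def by (auto intro: holomorphic_on_subset)
  from holomorphic_on_compose_cnj_cnj[OF this assms(2)]
  show "(\<lambda>z. ctrans (F (cnj z)) $ i $ j) holomorphic_on S"
    by (simp add: o_def ctrans_def)
qed

lemma mholo_ctrans_reflect:
  assumes "mholo F T" "open S" "0 \<notin> S" "\<And>z. z \<in> S \<Longrightarrow> 1 / cnj z \<in> T"
  shows "mholo (\<lambda>z. ctrans (F (1 / cnj z))) S"
proof -
  have "mholo (\<lambda>w. F (1 / w)) (cnj ` S)"
    by (rule mholo_compose[OF assms(1)]) (use assms(3,4) in \<open>auto intro!: holomorphic_intros\<close>)
  from mholo_ctrans_cnj[OF this assms(2)] show ?thesis by auto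
qed

lemma field_differentiable_at_exp_chart:
  fixes f :: "complex \<Rightarrow> complex"
  assumes z: "z \<noteq> 0" and h: "(\<lambda>w. f (z * exp w)) field_differentiable at 0"
  shows "f field_differentiable at z"
proof -
  define h where "h = (\<lambda>w. f (z * exp w))"
  have "h field_differentiable at (Ln (z / z))"
    using h z by (simp add: h_def)
  moreover have "(\<lambda>x. Ln (x / z)) field_differentiable at z"
  proof -
    have "(\<lambda>x. x / z) field_differentiable at z"
      using DERIV_cdivide[OF DERIV_ident, of z z] unfolding field_differentiable_def by blast
    moreover have "Ln field_differentiable at (z / z)" using z by (auto intro!: field_differentiable_at_Ln)
    ultimately show ?thesis using field_differentiable_compose[of "\<lambda>x. x / z" z Ln] by (simp add: o_def)
  qed
  ultimately have "(h \<circ> (\<lambda>x. Ln (x / z))) field_differentiable at z"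
    by (rule field_differentiable_compose[rotated])
  moreover have "(h \<circ> (\<lambda>x. Ln (x / z))) x = f x" if "dist x z < norm z" for x
  proof -
    have "x \<noteq> 0" using that by (auto simp: dist_norm)
    then show ?thesis using z by (simp add: h_def exp_Ln)
  qed
  ultimately show ?thesis
    using field_differentiable_transform_within[of "norm z" z UNIV "h \<circ> (\<lambda>x. Ln (x / z))" f] z
    by auto
qed

text \<open>In the chart \<open>w \<mapsto> z exp w\<close> the circle through \<open>z\<close> becomes the imaginary axis, across
  which holomorphic functions can be pasted.\<close>

lemma field_differentiable_across_circle:
  fixes f :: "complex \<Rightarrow> complex"
  assumes r: "0 < r" "r < R" and hol_in: "f holomorphic_on ball 0 r"
    and hol_out: "f holomorphic_on {z. r < norm z \<and> norm z < R}"
    and cont: "continuous_on (ball 0 R) f" and z: "norm z = r"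
  shows "f field_differentiable at z"
proof (rule field_differentiable_at_exp_chart)
  define d where "d = ln (R / r)"
  have d: "0 < d" "exp d = R / r" using r by (simp_all add: d_def)
  show "z \<noteq> 0" using z r by auto
  have norm_z_exp: "norm (z * exp w) = r * exp (Re w)" for w
    using z by (simp add: norm_mult)
  have below_R: "norm (z * exp w) < R" if "w \<in> ball 0 d" for w
  proof -
    have "Re w < d" using that complex_Re_le_cmod[of w] by (simp add: dist_norm)
    then have "exp (Re w) < R / r" using d by (metis exp_less_cancel_iff)
    then show ?thesis using r norm_z_exp by (simp add: field_simps)
  qed
  have "(\<lambda>w. f (z * exp w)) holomorphic_on ball 0 d"
  proof (rule holomorphic_on_paste_across_line[OF open_ball, of 1 _ 0])
    show "(\<lambda>w. f (z * exp w)) holomorphic_on ball 0 d \<inter> {w. 1 \<bullet> w < 0}"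
      by (rule holomorphic_on_compose_gen[where g=f and t="ball 0 r", unfolded o_def, OF _ hol_in])
        (use r in \<open>auto intro!: holomorphic_intros simp: norm_z_exp inner_complex_def\<close>)
    show "(\<lambda>w. f (z * exp w)) holomorphic_on ball 0 d \<inter> {w. 0 < 1 \<bullet> w}"
      by (rule holomorphic_on_compose_gen[where t="{z. r < norm z \<and> norm z < R}",
            unfolded o_def, OF _ hol_out])
        (use r below_R in \<open>auto intro!: holomorphic_intros simp: norm_z_exp inner_complex_def\<close>)
    show "continuous_on (ball 0 d) (\<lambda>w. f (z * exp w))"
      by (rule continuous_on_compose2[OF cont]) (use below_R in \<open>auto intro!: continuous_intros\<close>)
  qed auto
  then show "(\<lambda>w. f (z * exp w)) field_differentiable at 0"
    using holomorphic_on_imp_differentiable_at d by auto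
qed

lemma holomorphic_on_paste_across_circle:
  fixes f :: "complex \<Rightarrow> complex"
  assumes "0 < r" "r < R" "f holomorphic_on ball 0 r"
    and hol_out: "f holomorphic_on {z. r < norm z \<and> norm z < R}"
    and "continuous_on (ball 0 R) f"
  shows "f holomorphic_on ball 0 R"
proof -
  have open_annulus: "open {z::complex. r < norm z \<and> norm z < R}"
    by (intro open_Collect_conj open_Collect_less continuous_intros)
  have "f field_differentiable at z" if "z \<in> ball 0 R" for z
  proof -
    consider "norm z < r" | "r < norm z" | "norm z = r" by linarith
    then show ?thesis
      using that assms holomorphic_on_imp_differentiable_at[OF hol_out open_annulus]
        holomorphic_on_imp_differentiable_at[of f "ball 0 r"]
      by cases (auto intro: field_differentiable_across_circle)
  qed
  then show ?thesis unfolding holomorphic_on_def using field_differentiable_at_within by blast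
qed

lemma mholo_paste_across_circle:
  fixes F G :: "complex \<Rightarrow> complex^'n::finite^'n"
  assumes r: "0 < r" "r < R"
    and F: "mholo F (ball 0 r)" "continuous_on (cball 0 r) F"
    and G: "mholo G {z. r < norm z \<and> norm z < R}" "continuous_on {z. r \<le> norm z \<and> norm z \<le> R} G"
    and FG: "\<And>z. norm z = r \<Longrightarrow> F z = G z"
  defines "H \<equiv> \<lambda>z. if norm z \<le> r then F z else G z"
  shows "continuous_on (cball 0 R) H" "mholo H (ball 0 R)"
proof -
  have closed_ring: "closed {z::complex. r \<le> norm z \<and> norm z \<le> R}"
    by (intro closed_Collect_conj closed_Collect_le continuous_intros)
  have split: "cball 0 R = cball 0 r \<union> {z. r \<le> norm z \<and> norm z \<le> R}" using r by auto
  have "continuous_on (cball 0 r \<union> {z. r \<le> norm z \<and> norm z \<le> R}) H"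
    unfolding H_def by (rule continuous_on_cases[OF closed_cball closed_ring F(2) G(2)]) (use FG in auto)
  then show cont: "continuous_on (cball 0 R) H" unfolding split .
  have "mholo H (ball 0 r)" by (rule mholo_cong[OF F(1)]) (simp add: H_def)
  moreover have "mholo H {z. r < norm z \<and> norm z < R}" by (rule mholo_cong[OF G(1)]) (simp add: H_def)
  moreover have "continuous_on (ball 0 R) H" using cont by (rule continuous_on_subset) auto
  ultimately show "mholo H (ball 0 R)"
    unfolding mholo_def
    by (intro allI holomorphic_on_paste_across_circle[OF r] continuous_on_component) auto
qed


section \<open>Loops on the circles \<open>C^(e)\<close>\<close>

lemma norm_omega [simp]: "norm (omega k) = 1"
  unfolding omega_def by (simp add: norm_exp_eq_Re)

lemma omega_nonzero [simp]: "omega k \<noteq> 0"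
  by (simp add: omega_def)

lemma norm_omega_mult [simp]: "norm (omega k * z) = norm z"
  by (simp add: norm_mult)

lemma radii_order:
  fixes e e' :: real
  assumes "0 < e" "e < e'" "e' < 1"
  shows "e' < 1 / e'" "1 / e' < 1 / e"
proof -
  have "e' * e' < 1" using mult_strict_mono[of e' 1 e' 1] assms by auto
  then show "e' < 1 / e'" "1 / e' < 1 / e" using assms by (simp_all add: field_simps)
qed

lemma norm_one_divide_le:
  fixes z :: "'a::real_normed_field"
  assumes "0 < e" "1 / e \<le> norm z"
  shows "norm (1 / z) \<le> e"
proof -
  have "0 < 1 / e" using assms by simp
  then have "0 < norm z" using assms by linarith
  then show ?thesis using assms by (simp add: norm_divide field_simps)
qed

lemma norm_one_divide_less:
  fixes z :: "'a::real_normed_field"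
  assumes "0 < e" "1 / e < norm z"
  shows "norm (1 / z) < e"
proof -
  have "0 < 1 / e" using assms by simp
  then have "0 < norm z" using assms by linarith
  then show ?thesis using assms by (simp add: norm_divide field_simps)
qed

lemma norm_one_divide_ge:
  fixes z :: "'a::real_normed_field"
  assumes "z \<noteq> 0" "norm z \<le> e"
  shows "1 / e \<le> norm (1 / z)"
  using assms by (simp add: norm_divide frac_le)

lemma norm_one_divide_greater:
  fixes z :: "'a::real_normed_field"
  assumes "z \<noteq> 0" "norm z < e"
  shows "1 / e < norm (1 / z)"
  using assms by (simp add: norm_divide frac_less2)

lemma Ccirc_omega_mult: "z \<in> Ccirc e \<Longrightarrow> omega k * z \<in> Ccirc e"
  unfolding Ccirc_def by auto

lemma Ccirc_inverse_cnj: "z \<in> Ccirc e \<Longrightarrow> 1 / cnj z \<in> Ccirc e"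
  unfolding Ccirc_def by (auto simp: norm_divide)

lemma Ccirc_subset_Eclos:
  assumes "0 < e" "e \<le> e'" "e' < 1"
  shows "Ccirc e' \<subseteq> Eclos e"
proof -
  have "e * e' \<le> 1" using mult_le_one[of e e'] assms by auto
  then have "e' \<le> 1 / e" "e \<le> 1 / e'" "1 / e' \<le> 1 / e" using assms by (simp_all add: field_simps)
  then show ?thesis using assms by (auto simp: Ccirc_def Eclos_def)
qed

lemma open_Eann: "open (Eann e)"
  unfolding Eann_def by (intro open_Collect_conj open_Collect_less continuous_intros)

lemma Eclos_inverse_cnj:
  assumes "0 < e" "z \<in> Eclos e"
  shows "1 / cnj z \<in> Eclos e"
proof -
  have "0 < norm z" using assms by (auto simp: Eclos_def)
  then show ?thesis using assms by (auto simp: Eclos_def norm_divide field_simps)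
qed

lemma Eann_inverse_cnj:
  assumes "0 < e" "z \<in> Eann e"
  shows "1 / cnj z \<in> Eann e"
proof -
  have "0 < norm z" using assms by (auto simp: Eann_def)
  then show ?thesis using assms by (auto simp: Eann_def norm_divide field_simps)
qed

lemma inverse_cnj_circle_point: "c \<noteq> 0 \<Longrightarrow> 1 / cnj (of_real c * cis t) = of_real (1 / c) * cis t"
  by (simp add: cis_cnj field_simps cis_mult flip: cis_divide)

lemma circle_points_in_Ccirc:
  "0 < e \<Longrightarrow> of_real e * cis t \<in> Ccirc e" "0 < e \<Longrightarrow> of_real (1 / e) * cis t \<in> Ccirc e"
  by (auto simp: Ccirc_def norm_mult norm_divide)

lemma Lam_cong:
  assumes "0 < e" "f \<in> Lam Gc tau k e" "\<And>z. z \<in> Ccirc e \<Longrightarrow> f z = g z"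
  shows "g \<in> Lam Gc tau k e"
proof -
  have "(\<lambda>t. f (of_real e * cis t)) = (\<lambda>t. g (of_real e * cis t))"
    "(\<lambda>t. f (of_real (1 / e) * cis t)) = (\<lambda>t. g (of_real (1 / e) * cis t))"
    using assms(1,3) circle_points_in_Ccirc by auto
  then show ?thesis
    using assms Ccirc_omega_mult Ccirc_inverse_cnj unfolding Lam_def smooth_on_circles_def by simp
qed

lemma LamE_cong:
  assumes "0 < e" "f \<in> LamE Gc tau k e" "\<And>z. z \<in> Ccirc e \<Longrightarrow> f z = g z"
  shows "g \<in> LamE Gc tau k e"
  using assms Lam_cong[OF assms(1) _ assms(3)] unfolding LamE_def EExt_def by auto

lemma Lam_of_mholo:
  assumes "0 < e" "mholo F U" "open U" "Ccirc e \<subseteq> U"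
    and "\<And>z. z \<in> Ccirc e \<Longrightarrow> F z \<in> Gc" "\<And>z. z \<in> Ccirc e \<Longrightarrow> F (omega k * z) = tau (F z)"
    "\<And>z. z \<in> Ccirc e \<Longrightarrow> cbar (F z) = F (1 / cnj z)"
  shows "F \<in> Lam Gc tau k e"
proof -
  have "of_real e * cis t \<in> U" "of_real (1 / e) * cis t \<in> U" for t
    using assms(1,4) circle_points_in_Ccirc by auto
  then have "smooth_on_circles e F"
    unfolding smooth_on_circles_def using smooth_real_mholo_on_circle[OF assms(2,3)] by blast
  then show ?thesis using assms unfolding Lam_def by auto
qed

lemma unique_factorizationD:
  assumes "unique_factorization Gc tau k B" "0 < e" "e < 1" "h \<in> Lam Gc tau k e"
  shows "\<exists>hE\<in>LamE Gc tau k e. \<exists>hI\<in>LamIB Gc tau k B e. \<forall>z\<in>Ccirc e. h z = hE z ** hI z"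
    and "\<lbrakk>hE \<in> LamE Gc tau k e; hI \<in> LamIB Gc tau k B e; \<And>z. z \<in> Ccirc e \<Longrightarrow> h z = hE z ** hI z;
      hE' \<in> LamE Gc tau k e; hI' \<in> LamIB Gc tau k B e; \<And>z. z \<in> Ccirc e \<Longrightarrow> h z = hE' z ** hI' z;
      z \<in> Ccirc e\<rbrakk> \<Longrightarrow> hE z = hE' z"
  using assms(1)[unfolded unique_factorization_def, rule_format, OF conjI[OF assms(2,3)] assms(4)]
  by blast+

text \<open>The normalisation to \<open>0\<close> off \<open>C^(e)\<close> in the definition of \<open>dress\<close> is what makes its
  description unique.\<close>

lemma dress_factorization:
  fixes g h :: "complex \<Rightarrow> 'n::finite cmat"
  assumes fac: "unique_factorization Gc tau k B" and e: "0 < e" "e < 1"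
    and gh: "(\<lambda>z. g z ** h z) \<in> Lam Gc tau k e"
  obtains kI where "dress Gc tau k B e g h \<in> LamE Gc tau k e" "kI \<in> LamIB Gc tau k B e"
    "\<And>z. z \<in> Ccirc e \<Longrightarrow> g z ** h z = dress Gc tau k B e g h z ** kI z"
proof -
  obtain hE hI where hE: "hE \<in> LamE Gc tau k e" and hI: "hI \<in> LamIB Gc tau k B e"
    and gh_eq: "\<And>z. z \<in> Ccirc e \<Longrightarrow> g z ** h z = hE z ** hI z"
    using unique_factorizationD(1)[OF fac e gh] by blast
  define hE0 where "hE0 z = (if z \<in> Ccirc e then hE z else 0)" for z
  have hE0: "hE0 \<in> LamE Gc tau k e" by (rule LamE_cong[OF e(1) hE]) (simp add: hE0_def)
  have "dress Gc tau k B e g h = hE0"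
    unfolding dress_def
  proof (rule the_equality)
    show "hE0 \<in> LamE Gc tau k e \<and> (\<forall>z. z \<notin> Ccirc e \<longrightarrow> hE0 z = 0) \<and>
        (\<exists>kI\<in>LamIB Gc tau k B e. \<forall>z\<in>Ccirc e. g z ** h z = hE0 z ** kI z)"
      using hE0 hI gh_eq by (auto simp: hE0_def)
    fix X
    assume "X \<in> LamE Gc tau k e \<and> (\<forall>z. z \<notin> Ccirc e \<longrightarrow> X z = 0) \<and>
        (\<exists>kI\<in>LamIB Gc tau k B e. \<forall>z\<in>Ccirc e. g z ** h z = X z ** kI z)"
    then obtain kX where X: "X \<in> LamE Gc tau k e" "\<And>z. z \<notin> Ccirc e \<Longrightarrow> X z = 0"
      "kX \<in> LamIB Gc tau k B e" "\<And>z. z \<in> Ccirc e \<Longrightarrow> g z ** h z = X z ** kX z"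
      by blast
    show "X = hE0"
    proof
      fix z
      show "X z = hE0 z"
        using unique_factorizationD(2)[OF fac e gh X(1,3) X(4) hE hI gh_eq] X(2)
        by (cases "z \<in> Ccirc e") (auto simp: hE0_def)
    qed
  qed
  then show ?thesis using that[of hI] hE0 hI gh_eq by (simp add: hE0_def)
qed

lemma dress_unique:
  fixes g h :: "complex \<Rightarrow> 'n::finite cmat"
  assumes fac: "unique_factorization Gc tau k B" and e: "0 < e" "e < 1"
    and gh: "(\<lambda>z. g z ** h z) \<in> Lam Gc tau k e"
    and hE: "hE \<in> LamE Gc tau k e" and hI: "hI \<in> LamIB Gc tau k B e"
    and gh_eq: "\<And>z. z \<in> Ccirc e \<Longrightarrow> g z ** h z = hE z ** hI z"
    and z: "z \<in> Ccirc e"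
  shows "dress Gc tau k B e g h z = hE z"
proof -
  obtain kI where "dress Gc tau k B e g h \<in> LamE Gc tau k e" "kI \<in> LamIB Gc tau k B e"
    "\<And>z. z \<in> Ccirc e \<Longrightarrow> g z ** h z = dress Gc tau k B e g h z ** kI z"
    using dress_factorization[OF fac e gh] by blast
  from unique_factorizationD(2)[OF fac e gh this hE hI gh_eq z] show ?thesis .
qed

section \<open>Patching across \<open>C^(e)\<close>\<close>

definition annulus_patch :: "real \<Rightarrow> (complex \<Rightarrow> 'a) \<Rightarrow> (complex \<Rightarrow> 'a) \<Rightarrow> complex \<Rightarrow> 'a" where
  "annulus_patch e Q F z = (if z \<in> Eclos e then Q z else F z)"

lemma annulus_patch_inside:
  assumes e: "0 < e" "e < e'" "e' < 1" and QF: "\<And>z. z \<in> Ccirc e \<Longrightarrow> Q z = F z"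
    and z: "norm z \<le> e'"
  shows "annulus_patch e Q F z = (if norm z \<le> e then F z else Q z)"
proof -
  have "e' < 1 / e" using radii_order[OF e] by linarith
  then have "z \<in> Eclos e \<longleftrightarrow> e \<le> norm z" using z by (auto simp: Eclos_def)
  moreover have "norm z = e \<Longrightarrow> Q z = F z" using QF by (simp add: Ccirc_def)
  ultimately show ?thesis by (auto simp: annulus_patch_def)
qed

lemma at_inf_chart_annulus_patch:
  assumes e: "0 < e" "e < e'" "e' < 1" and QF: "\<And>z. z \<in> Ccirc e \<Longrightarrow> Q z = F z"
    and z: "norm z \<le> e'"
  shows "at_inf_chart (annulus_patch e Q F) Finf z =
    (if norm z \<le> e then at_inf_chart F Finf z else Q (1 / z))"
proof (cases "z = 0")
  case False
  have "e * norm z \<le> 1" using mult_le_one[of e "norm z"] e z by auto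
  then have "1 / z \<in> Eclos e \<longleftrightarrow> e \<le> norm z"
    using e z False by (auto simp: Eclos_def norm_divide field_simps)
  moreover have "norm z = e \<Longrightarrow> Q (1 / z) = F (1 / z)" using QF by (simp add: Ccirc_def norm_divide)
  ultimately show ?thesis using False by (auto simp: annulus_patch_def at_inf_chart_def)
qed (use e in \<open>simp add: at_inf_chart_def\<close>)

lemma mholo_annulus_patch:
  fixes F Q :: "complex \<Rightarrow> complex^'n::finite^'n"
  assumes e: "0 < e" "e < e'" "e' < 1"
    and F: "mholo F (ball 0 e)" "continuous_on (cball 0 e) F"
    and Q: "mholo Q {z. e < norm z \<and> norm z < e'}" "continuous_on {z. e \<le> norm z \<and> norm z \<le> e'} Q"
    and QF: "\<And>z. z \<in> Ccirc e \<Longrightarrow> Q z = F z"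
  shows "mholo (annulus_patch e Q F) (ball 0 e')" "continuous_on (cball 0 e') (annulus_patch e Q F)"
proof -
  have patch: "continuous_on (cball 0 e') (\<lambda>z. if norm z \<le> e then F z else Q z)"
    "mholo (\<lambda>z. if norm z \<le> e then F z else Q z) (ball 0 e')"
    using mholo_paste_across_circle[OF e(1,2) F Q] QF by (auto simp: Ccirc_def)
  have inside: "annulus_patch e Q F z = (if norm z \<le> e then F z else Q z)" if "norm z \<le> e'" for z
    using annulus_patch_inside[OF e QF that] .
  show "mholo (annulus_patch e Q F) (ball 0 e')"
    by (rule mholo_cong[OF patch(2)]) (simp add: inside)
  show "continuous_on (cball 0 e') (annulus_patch e Q F)"
    by (rule continuous_on_eq[OF patch(1)]) (simp add: inside)
qed

lemma mholo_at_inf_chart_annulus_patch: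
  fixes F Q :: "complex \<Rightarrow> complex^'n::finite^'n"
  assumes e: "0 < e" "e < e'" "e' < 1"
    and F: "mholo (at_inf_chart F Finf) (ball 0 e)" "continuous_on (cball 0 e) (at_inf_chart F Finf)"
    and Q: "mholo Q {z. 1 / e' < norm z \<and> norm z < 1 / e}"
      "continuous_on {z. 1 / e' \<le> norm z \<and> norm z \<le> 1 / e} Q"
    and QF: "\<And>z. z \<in> Ccirc e \<Longrightarrow> Q z = F z"
  shows "mholo (at_inf_chart (annulus_patch e Q F) Finf) (ball 0 e')"
    "continuous_on (cball 0 e') (at_inf_chart (annulus_patch e Q F) Finf)"
proof -
  have inverse_ring: "1 / z \<in> {w. 1 / e' \<le> norm w \<and> norm w \<le> 1 / e}"
    if "z \<in> {w. e \<le> norm w \<and> norm w \<le> e'}" for z :: complex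
  proof -
    have "z \<noteq> 0" using that e by auto
    then show ?thesis using that e norm_one_divide_ge[of z e'] norm_one_divide_le[of "1 / e" z] by auto
  qed
  have inverse_open_ring: "1 / z \<in> {w. 1 / e' < norm w \<and> norm w < 1 / e}"
    if "z \<in> {w. e < norm w \<and> norm w < e'}" for z :: complex
  proof -
    have "z \<noteq> 0" using that e by auto
    then show ?thesis
      using that e norm_one_divide_greater[of z e'] norm_one_divide_less[of "1 / e" z] by auto
  qed
  have "mholo (\<lambda>z. Q (1 / z)) {z. e < norm z \<and> norm z < e'}"
    by (rule mholo_compose[OF Q(1)]) (use e inverse_open_ring in \<open>auto intro!: holomorphic_intros\<close>)
  moreover have "continuous_on {z. e \<le> norm z \<and> norm z \<le> e'} (\<lambda>z. Q (1 / z))"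
    by (rule continuous_on_compose2[OF Q(2)]) (use e inverse_ring in \<open>auto intro!: continuous_intros\<close>)
  moreover have "at_inf_chart F Finf z = Q (1 / z)" if "norm z = e" for z
    using that e QF[of "1 / z"] by (auto simp: at_inf_chart_def Ccirc_def norm_divide)
  ultimately have patch: "continuous_on (cball 0 e')
      (\<lambda>z. if norm z \<le> e then at_inf_chart F Finf z else Q (1 / z))"
    "mholo (\<lambda>z. if norm z \<le> e then at_inf_chart F Finf z else Q (1 / z)) (ball 0 e')"
    using mholo_paste_across_circle[OF e(1,2) F] by auto
  have inside: "at_inf_chart (annulus_patch e Q F) Finf z =
      (if norm z \<le> e then at_inf_chart F Finf z else Q (1 / z))" if "norm z \<le> e'" for z
    using at_inf_chart_annulus_patch[OF e QF that] .
  show "mholo (at_inf_chart (annulus_patch e Q F) Finf) (ball 0 e')"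
    by (rule mholo_cong[OF patch(2)]) (simp add: inside)
  show "continuous_on (cball 0 e') (at_inf_chart (annulus_patch e Q F) Finf)"
    by (rule continuous_on_eq[OF patch(1)]) (simp add: inside)
qed

locale twisted_loops =
  fixes Gc :: "'n::finite cmat set" and tau :: "'n cmat \<Rightarrow> 'n cmat" and k :: nat
    and B :: "'n cmat set"
  assumes setting: "twisted_setting Gc tau k B"
begin

lemma Gc_mat1: "mat 1 \<in> Gc"
  and Gc_invertible: "X \<in> Gc \<Longrightarrow> invertible X"
  and Gc_mult: "X \<in> Gc \<Longrightarrow> Y \<in> Gc \<Longrightarrow> X ** Y \<in> Gc"
  and Gc_matrix_inv: "X \<in> Gc \<Longrightarrow> matrix_inv X \<in> Gc"
  using setting unfolding twisted_setting_def is_mgroup_def by auto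

lemma tau_mult: "X \<in> Gc \<Longrightarrow> Y \<in> Gc \<Longrightarrow> tau (X ** Y) = tau X ** tau Y"
  using setting unfolding twisted_setting_def by auto

lemma tau_Gc: "X \<in> Gc \<Longrightarrow> tau X \<in> Gc"
  using setting unfolding twisted_setting_def bij_betw_def by auto

lemma tau_mat1: "tau (mat 1) = mat 1"
proof -
  have "tau (mat 1) ** tau (mat 1) = tau (mat 1)" using tau_mult[OF Gc_mat1 Gc_mat1] by simp
  then have "matrix_inv (tau (mat 1)) ** (tau (mat 1) ** tau (mat 1)) =
      matrix_inv (tau (mat 1)) ** tau (mat 1)"
    by simp
  then show ?thesis
    by (simp add: matrix_mul_assoc matrix_inv_left Gc_invertible tau_Gc Gc_mat1)
qed

lemma tau_matrix_inv: "X \<in> Gc \<Longrightarrow> tau (matrix_inv X) = matrix_inv (tau X)"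
  by (metis Gc_invertible Gc_matrix_inv matrix_inv_right matrix_inv_unique tau_mat1 tau_Gc tau_mult)

lemma Lam_mult:
  assumes "f \<in> Lam Gc tau k e" "g \<in> Lam Gc tau k e"
  shows "(\<lambda>z. f z ** g z) \<in> Lam Gc tau k e"
  using assms unfolding Lam_def smooth_on_circles_def
  by (auto intro!: smooth_real_matrix_mult Gc_mult simp: tau_mult cbar_mult Gc_invertible)

text \<open>On a real loop the inverse is \<open>f(z)^-1 = f(1/cnj z)^*\<close>, which is smooth.\<close>

lemma Lam_matrix_inv:
  assumes "0 < e" "f \<in> Lam Gc tau k e"
  shows "(\<lambda>z. matrix_inv (f z)) \<in> Lam Gc tau k e"
proof -
  have fG: "f z \<in> Gc" if "z \<in> Ccirc e" for z using assms that unfolding Lam_def by auto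
  have inv: "matrix_inv (f z) = ctrans (f (1 / cnj z))" if "z \<in> Ccirc e" for z
    using assms that fG[OF that] unfolding Lam_def by (simp add: matrix_inv_eq_ctrans_cbar Gc_invertible)
  have e0: "e \<noteq> 0" "1 / e \<noteq> 0" using assms(1) by auto
  have "matrix_inv (f (of_real e * cis t)) = ctrans (f (of_real (1 / e) * cis t))" for t
    using inv[OF circle_points_in_Ccirc(1)[OF assms(1)], of t]
    unfolding inverse_cnj_circle_point[OF e0(1)] .
  moreover have "matrix_inv (f (of_real (1 / e) * cis t)) = ctrans (f (of_real e * cis t))" for t
    using inv[OF circle_points_in_Ccirc(2)[OF assms(1)], of t]
    unfolding inverse_cnj_circle_point[OF e0(2)] by simp
  ultimately have "(\<lambda>t. matrix_inv (f (of_real e * cis t))) = (\<lambda>t. ctrans (f (of_real (1 / e) * cis t)))"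
    "(\<lambda>t. matrix_inv (f (of_real (1 / e) * cis t))) = (\<lambda>t. ctrans (f (of_real e * cis t)))"
    by auto
  then have "smooth_on_circles e (\<lambda>z. matrix_inv (f z))"
    using assms(2) unfolding Lam_def smooth_on_circles_def by (auto intro!: smooth_real_ctrans)
  then show ?thesis
    using assms fG unfolding Lam_def
    by (auto intro!: Gc_matrix_inv simp: tau_matrix_inv cbar_matrix_inv Gc_invertible)
qed

lemma IExt_twisted_real:
  assumes I: "IExt Gc tau k e g F Finf" and e: "0 < e" and z: "norm z \<le> e \<or> 1 / e \<le> norm z"
  shows "F z \<in> Gc" "F (omega k * z) = tau (F z)" "z \<noteq> 0 \<Longrightarrow> cbar (F z) = F (1 / cnj z)"
proof -
  have chart: "at_inf_chart F Finf w = F (1 / w)" if "w \<noteq> 0" for w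
    using that by (simp add: at_inf_chart_def)
  have "F z \<in> Gc \<and> F (omega k * z) = tau (F z)"
  proof (cases "norm z \<le> e")
    case False
    then have "1 / e \<le> norm z" using z by auto
    then have "z \<noteq> 0" "1 / z \<in> cball 0 e" using e norm_one_divide_le[of e z] by auto
    moreover have "\<forall>w\<in>cball 0 e. at_inf_chart F Finf w \<in> Gc \<and>
        at_inf_chart F Finf (w / omega k) = tau (at_inf_chart F Finf w)"
      using I unfolding IExt_def by auto
    ultimately show ?thesis by (auto dest!: bspec[of _ _ "1 / z"] simp: chart ac_simps)
  qed (use I in \<open>auto simp: IExt_def\<close>)
  then show "F z \<in> Gc" "F (omega k * z) = tau (F z)" by auto
  show "cbar (F z) = F (1 / cnj z)" if z0: "z \<noteq> 0"
  proof (cases "norm z \<le> e")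
    case False
    then have "1 / e \<le> norm (cnj z)" using z by auto
    then have w: "1 / cnj z \<in> cball 0 e" "1 / cnj z \<noteq> 0"
      using e z0 norm_one_divide_le[of e "cnj z"] by auto
    then have "cbar (F (1 / cnj z)) = F z" "F (1 / cnj z) \<in> Gc"
      using I unfolding IExt_def by (auto simp: chart)
    then have "cbar (F z) = cbar (cbar (F (1 / cnj z)))" by simp
    also have "\<dots> = F (1 / cnj z)" by (rule cbar_cbar[OF Gc_invertible]) fact
    finally show ?thesis .
  qed (use I z0 in \<open>auto simp: IExt_def chart\<close>)
qed

lemma IExt_at_zero:
  assumes "IExt Gc tau k e g F Finf" "0 < e"
  shows "Finf \<in> Gc" "tau Finf = Finf" "cbar (F 0) = Finf"
proof -
  have "(0::complex) \<in> cball 0 e" using assms(2) by simp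
  then have "at_inf_chart F Finf 0 \<in> Gc" "at_inf_chart F Finf (0 / omega k) = tau (at_inf_chart F Finf 0)"
    "cbar (F 0) = at_inf_chart F Finf (cnj 0)"
    using assms(1) unfolding IExt_def by blast+
  then show "Finf \<in> Gc" "tau Finf = Finf" "cbar (F 0) = Finf"
    by (simp_all add: at_inf_chart_def)
qed

lemma IExt_intro:
  assumes e: "0 < e"
    and "mholo F (ball 0 e)" "continuous_on (cball 0 e) F"
    and "mholo (at_inf_chart F Finf) (ball 0 e)" "continuous_on (cball 0 e) (at_inf_chart F Finf)"
    and "\<And>z. z \<in> Ccirc e \<Longrightarrow> F z = g z"
    and twisted_real: "\<And>z. norm z \<le> e \<or> 1 / e \<le> norm z \<Longrightarrow>
        F z \<in> Gc \<and> F (omega k * z) = tau (F z) \<and> (z \<noteq> 0 \<longrightarrow> cbar (F z) = F (1 / cnj z))"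
    and "Finf \<in> Gc" "tau Finf = Finf" "cbar (F 0) = Finf"
  shows "IExt Gc tau k e g F Finf"
  unfolding IExt_def
proof (intro conjI ballI assms)
  fix z :: complex assume "z \<in> cball 0 e"
  then have z: "norm z \<le> e" by simp
  then have inv: "1 / e \<le> norm (1 / z)" if "z \<noteq> 0" using norm_one_divide_ge that by blast
  show "F z \<in> Gc" "F (omega k * z) = tau (F z)" using twisted_real z by blast+
  show "at_inf_chart F Finf z \<in> Gc"
    using assms(8) twisted_real[OF disjI2[OF inv]] by (cases "z = 0") (auto simp: at_inf_chart_def)
  show "at_inf_chart F Finf (z / omega k) = tau (at_inf_chart F Finf z)"
  proof (cases "z = 0")
    case False
    then have "F (omega k * (1 / z)) = tau (F (1 / z))" using twisted_real[OF disjI2[OF inv]] by blast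
    then show ?thesis using False by (simp add: at_inf_chart_def)
  qed (use assms(9) in \<open>simp add: at_inf_chart_def\<close>)
  show "cbar (F z) = at_inf_chart F Finf (cnj z)"
    using assms(10) twisted_real z by (cases "z = 0") (auto simp: at_inf_chart_def)
qed

lemma IExt_outside:
  assumes I: "IExt Gc tau k e g F Finf" and e: "0 < e"
  shows "mholo F {z. 1 / e < norm z}" "continuous_on {z. 1 / e \<le> norm z} F"
proof -
  have chart: "F z = at_inf_chart F Finf (1 / z)" if "1 / e \<le> norm z" for z
    using that e by (auto simp: at_inf_chart_def)
  have inv: "1 / z \<in> cball 0 e" if "1 / e \<le> norm z" for z :: complex
    using norm_one_divide_le[OF e that] by simp
  have "mholo (\<lambda>z. at_inf_chart F Finf (1 / z)) {z. 1 / e < norm z}"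
    by (rule mholo_compose[where T="ball 0 e"])
      (use I e norm_one_divide_less[OF e] in \<open>auto simp: IExt_def intro!: holomorphic_intros\<close>)
  then show "mholo F {z. 1 / e < norm z}" by (rule mholo_cong) (simp add: chart)
  have "continuous_on {z. 1 / e \<le> norm z} (\<lambda>z. at_inf_chart F Finf (1 / z))"
    by (rule continuous_on_compose2[where t="cball 0 e"])
      (use I e inv in \<open>auto simp: IExt_def intro!: continuous_intros\<close>)
  then show "continuous_on {z. 1 / e \<le> norm z} F" by (rule continuous_on_eq) (simp add: chart)
qed

lemma IExt_imp_Lam:
  assumes I: "IExt Gc tau k e' g F Finf" and e: "0 < e" "e < e'"
  shows "F \<in> Lam Gc tau k e"
proof (rule Lam_of_mholo[OF e(1)])
  have "open {z::complex. 1 / e' < norm z}" by (intro open_Collect_less continuous_intros)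
  then show "open (ball 0 e' \<union> {z::complex. 1 / e' < norm z})" by (intro open_Un open_ball)
  have "mholo F (ball 0 e')" "mholo F {z. 1 / e' < norm z}"
    using I IExt_outside(1)[OF I] e unfolding IExt_def by auto
  with \<open>open {z. 1 / e' < norm z}\<close> show "mholo F (ball 0 e' \<union> {z::complex. 1 / e' < norm z})"
    unfolding mholo_def by (blast intro: holomorphic_on_Un open_ball)
  have "1 / e' < 1 / e" using e by (simp add: frac_less2)
  then show "Ccirc e \<subseteq> ball 0 e' \<union> {z::complex. 1 / e' < norm z}"
    using e by (auto simp: Ccirc_def)
  fix z assume "z \<in> Ccirc e"
  then have "norm z \<le> e' \<or> 1 / e' \<le> norm z" "z \<noteq> 0"
    using e \<open>1 / e' < 1 / e\<close> by (auto simp: Ccirc_def)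
  then show "F z \<in> Gc" "F (omega k * z) = tau (F z)" "cbar (F z) = F (1 / cnj z)"
    using IExt_twisted_real[OF I] e by auto
qed

lemma EExt_restrict:
  assumes E: "EExt Gc tau k e G F" and e: "0 < e" "e < e'" "e' < 1"
  shows "F \<in> LamE Gc tau k e'" "EExt Gc tau k e' F F"
proof -
  have sub: "Eclos e' \<subseteq> Eclos e" "Eann e' \<subseteq> Eann e" "Ccirc e' \<subseteq> Eclos e" "Ccirc e' \<subseteq> Eann e"
    using e radii_order[OF e] by (auto simp: Eclos_def Eann_def Ccirc_def)
  have hol: "mholo F (Eann e)" and cont: "continuous_on (Eclos e) F"
    using E unfolding EExt_def by auto
  show EE: "EExt Gc tau k e' F F"
    unfolding EExt_def
  proof (intro conjI ballI)
    show "mholo F (Eann e')" using mholo_subset[OF hol sub(2)] .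
    show "continuous_on (Eclos e') F" using continuous_on_subset[OF cont sub(1)] .
  qed (use E sub in \<open>auto simp: EExt_def\<close>)
  have "F \<in> Lam Gc tau k e'"
    by (rule Lam_of_mholo[of e' F "Eann e"])
      (use E e sub open_Eann in \<open>auto simp: EExt_def\<close>)
  then show "F \<in> LamE Gc tau k e'" using EE unfolding LamE_def by auto
qed

lemma annulus_patch_twisted_real:
  assumes e: "0 < e" and KI: "IExt Gc tau k e kI KI KIinf"
    and Q: "z \<in> Eclos e \<Longrightarrow>
      Q z \<in> Gc \<and> Q (omega k * z) = tau (Q z) \<and> cbar (Q z) = Q (1 / cnj z)"
  defines "P \<equiv> annulus_patch e Q KI"
  shows "P z \<in> Gc \<and> P (omega k * z) = tau (P z) \<and> (z \<noteq> 0 \<longrightarrow> cbar (P z) = P (1 / cnj z))"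
proof (cases "z \<in> Eclos e")
  case True
  then have "omega k * z \<in> Eclos e" "1 / cnj z \<in> Eclos e"
    using Eclos_inverse_cnj[OF e] by (auto simp: Eclos_def)
  then show ?thesis using Q True by (simp add: P_def annulus_patch_def)
next
  case False
  then have "omega k * z \<notin> Eclos e" "z \<noteq> 0 \<Longrightarrow> 1 / cnj z \<notin> Eclos e"
    using Eclos_inverse_cnj[OF e, of "1 / cnj z"] by (auto simp: Eclos_def)
  moreover have "norm z \<le> e \<or> 1 / e \<le> norm z" using False by (auto simp: Eclos_def)
  ultimately show ?thesis
    using False IExt_twisted_real[OF KI e] by (simp add: P_def annulus_patch_def)
qed

text \<open>Inside \<open>I^(e')\<close> the patch only uses \<open>Q\<close> on the two thin annuli between \<open>C^(e)\<close> and
  \<open>C^(e')\<close>, so \<open>Q\<close> need only be holomorphic there.\<close>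

lemma IExt_annulus_patch:
  assumes e: "0 < e" "e < e'" "e' < 1"
    and KI: "IExt Gc tau k e kI KI KIinf"
    and Q_hol: "mholo Q {z. e < norm z \<and> norm z < e'}" "mholo Q {z. 1 / e' < norm z \<and> norm z < 1 / e}"
    and Q_cont: "continuous_on {z. e \<le> norm z \<and> norm z \<le> e'} Q"
      "continuous_on {z. 1 / e' \<le> norm z \<and> norm z \<le> 1 / e} Q"
    and Q_KI: "\<And>z. z \<in> Ccirc e \<Longrightarrow> Q z = KI z"
    and Q: "\<And>z. z \<in> Eclos e \<Longrightarrow> norm z \<le> e' \<or> 1 / e' \<le> norm z \<Longrightarrow>
      Q z \<in> Gc \<and> Q (omega k * z) = tau (Q z) \<and> cbar (Q z) = Q (1 / cnj z)"
  shows "IExt Gc tau k e' (annulus_patch e Q KI) (annulus_patch e Q KI) KIinf"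
proof -
  have KI_an: "mholo KI (ball 0 e)" "continuous_on (cball 0 e) KI"
    "mholo (at_inf_chart KI KIinf) (ball 0 e)" "continuous_on (cball 0 e) (at_inf_chart KI KIinf)"
    using KI unfolding IExt_def by auto
  have "annulus_patch e Q KI z \<in> Gc \<and>
      annulus_patch e Q KI (omega k * z) = tau (annulus_patch e Q KI z) \<and>
      (z \<noteq> 0 \<longrightarrow> cbar (annulus_patch e Q KI z) = annulus_patch e Q KI (1 / cnj z))"
    if "norm z \<le> e' \<or> 1 / e' \<le> norm z" for z
    using annulus_patch_twisted_real[OF e(1) KI Q[OF _ that]] .
  moreover have "annulus_patch e Q KI 0 = KI 0" using e by (simp add: annulus_patch_def Eclos_def)
  ultimately show ?thesis
    using mholo_annulus_patch[OF e KI_an(1,2) Q_hol(1) Q_cont(1) Q_KI]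
      mholo_at_inf_chart_annulus_patch[OF e KI_an(3,4) Q_hol(2) Q_cont(2) Q_KI]
      IExt_at_zero[OF KI e(1)] e
    by (intro IExt_intro) auto
qed

text \<open>On a real loop \<open>KE(z)^-1 = KE(1/cnj z)^*\<close>, which shows that the inverse is holomorphic.\<close>

lemma EExt_matrix_inv:
  assumes "EExt Gc tau k e D KE" "z \<in> Eclos e"
  shows "matrix_inv (KE z) = ctrans (KE (1 / cnj z))"
  using assms unfolding EExt_def by (simp add: matrix_inv_eq_ctrans_cbar Gc_invertible)

lemma mholo_EExt_matrix_inv:
  assumes KE: "EExt Gc tau k e D KE" and e: "0 < e" and S: "open S" "S \<subseteq> Eann e"
  shows "mholo (\<lambda>z. matrix_inv (KE z)) S"
proof -
  have "mholo (\<lambda>z. ctrans (KE (1 / cnj z))) S"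
    by (rule mholo_ctrans_reflect[where T="Eann e"])
      (use KE e S Eann_inverse_cnj in \<open>auto simp: EExt_def Eann_def\<close>)
  then show ?thesis
    by (rule mholo_cong) (use KE S EExt_matrix_inv in \<open>auto simp: Eann_def Eclos_def\<close>)
qed

lemma continuous_on_EExt_matrix_inv:
  assumes KE: "EExt Gc tau k e D KE" and e: "0 < e" and S: "S \<subseteq> Eclos e"
  shows "continuous_on S (\<lambda>z. matrix_inv (KE z))"
proof -
  have "continuous_on S (\<lambda>z. KE (1 / cnj z))"
    by (rule continuous_on_compose2[where t="Eclos e"])
      (use KE e S Eclos_inverse_cnj in \<open>auto simp: EExt_def Eclos_def intro!: continuous_intros\<close>)
  then have "continuous_on S (\<lambda>z. ctrans (KE (1 / cnj z)))" by (rule continuous_on_ctrans)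
  then show ?thesis by (rule continuous_on_eq) (use KE S EExt_matrix_inv in auto)
qed

lemma quotient_mholo:
  assumes e: "0 < e" "e < e'" "e' < 1" and gext: "IExt Gc tau k e' g gx gxinf"
    and hext: "EExt Gc tau k e h hx" and KE: "EExt Gc tau k e D KE"
  defines "Q \<equiv> \<lambda>z. matrix_inv (KE z) ** (gx z ** hx z)"
  shows "mholo Q {z. e < norm z \<and> norm z < e'}" "mholo Q {z. 1 / e' < norm z \<and> norm z < 1 / e}"
    "continuous_on {z. e \<le> norm z \<and> norm z \<le> e'} Q"
    "continuous_on {z. 1 / e' \<le> norm z \<and> norm z \<le> 1 / e} Q"
proof -
  note ie = radii_order[OF e]
  have rings: "{z. e < norm z \<and> norm z < e'} \<subseteq> Eann e" "{z. 1 / e' < norm z \<and> norm z < 1 / e} \<subseteq> Eann e"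
    "{z. e \<le> norm z \<and> norm z \<le> e'} \<subseteq> Eclos e" "{z. 1 / e' \<le> norm z \<and> norm z \<le> 1 / e} \<subseteq> Eclos e"
    using e ie by (auto simp: Eann_def Eclos_def)
  have "open {z::complex. a < norm z \<and> norm z < b}" for a b
    by (intro open_Collect_conj open_Collect_less continuous_intros)
  then have inverse: "mholo (\<lambda>z. matrix_inv (KE z)) {z. e < norm z \<and> norm z < e'}"
    "mholo (\<lambda>z. matrix_inv (KE z)) {z. 1 / e' < norm z \<and> norm z < 1 / e}"
    using mholo_EExt_matrix_inv[OF KE e(1)] rings(1,2) by auto
  have gx: "mholo gx (ball 0 e')" "continuous_on (cball 0 e') gx"
    "mholo gx {z. 1 / e' < norm z}" "continuous_on {z. 1 / e' \<le> norm z} gx"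
    using gext IExt_outside[OF gext] e unfolding IExt_def by auto
  have hx: "mholo hx (Eann e)" "continuous_on (Eclos e) hx"
    using hext unfolding EExt_def by auto
  show "mholo Q {z. e < norm z \<and> norm z < e'}" "mholo Q {z. 1 / e' < norm z \<and> norm z < 1 / e}"
    unfolding Q_def using rings
    by (auto intro!: mholo_mult inverse intro: mholo_subset[OF gx(1)] mholo_subset[OF gx(3)]
        mholo_subset[OF hx(1)])
  show "continuous_on {z. e \<le> norm z \<and> norm z \<le> e'} Q"
    "continuous_on {z. 1 / e' \<le> norm z \<and> norm z \<le> 1 / e} Q"
    unfolding Q_def using rings
    by (auto intro!: continuous_on_matrix_mult continuous_on_EExt_matrix_inv[OF KE e(1)]
        intro: continuous_on_subset[OF gx(2)] continuous_on_subset[OF gx(4)]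
        continuous_on_subset[OF hx(2)])
qed

lemma quotient_twisted_real:
  assumes e: "0 < e" "0 < e'" and gext: "IExt Gc tau k e' g gx gxinf"
    and hext: "EExt Gc tau k e h hx" and KE: "EExt Gc tau k e D KE"
    and z: "z \<in> Eclos e" "norm z \<le> e' \<or> 1 / e' \<le> norm z"
  defines "Q \<equiv> \<lambda>z. matrix_inv (KE z) ** (gx z ** hx z)"
  shows "Q z \<in> Gc \<and> Q (omega k * z) = tau (Q z) \<and> cbar (Q z) = Q (1 / cnj z)"
proof -
  have "z \<noteq> 0" using z e by (auto simp: Eclos_def)
  then have gx: "gx z \<in> Gc" "gx (omega k * z) = tau (gx z)" "cbar (gx z) = gx (1 / cnj z)"
    using IExt_twisted_real[OF gext e(2) z(2)] by auto
  have "KE z \<in> Gc" "KE (omega k * z) = tau (KE z)" "cbar (KE z) = KE (1 / cnj z)"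
    "hx z \<in> Gc" "hx (omega k * z) = tau (hx z)" "cbar (hx z) = hx (1 / cnj z)"
    using KE hext z(1) unfolding EExt_def by auto
  with gx show ?thesis unfolding Q_def
    by (simp add: Gc_mult Gc_matrix_inv Gc_invertible invertible_matrix_inv
        tau_mult tau_matrix_inv cbar_mult cbar_matrix_inv)
qed

lemma quotient_on_Ccirc:
  assumes e: "0 < e" "e < 1" and hext: "EExt Gc tau k e h hx" and KE: "EExt Gc tau k e D KE"
    and KI: "IExt Gc tau k e kI KI KIinf"
    and z: "z \<in> Ccirc e" and fac: "gx z ** h z = D z ** kI z"
  shows "matrix_inv (KE z) ** (gx z ** hx z) = KI z"
proof -
  have "z \<in> Eclos e" using z Ccirc_subset_Eclos[of e e] e by auto
  then have eqs: "KE z = D z" "hx z = h z" "KI z = kI z" and "KE z \<in> Gc"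
    using KE hext KI z unfolding EExt_def IExt_def by auto
  then have "D z \<in> Gc" by simp
  have "matrix_inv (KE z) ** (gx z ** hx z) = matrix_inv (D z) ** (D z ** kI z)"
    using eqs fac by simp
  also have "\<dots> = kI z"
    by (simp add: matrix_mul_assoc matrix_inv_left Gc_invertible[OF \<open>D z \<in> Gc\<close>])
  finally show ?thesis using eqs by simp
qed

text \<open>The factor \<open>hI\<close> is \<open>KE^-1 g hx\<close> near \<open>C^(e')\<close> and \<open>KI\<close> away from \<open>E^(e)\<close>.\<close>

lemma LamIB_factor_on_larger_circles:
  assumes e: "0 < e" "e < e'" "e' < 1"
    and g: "g \<in> Lam Gc tau k e'" and gext: "IExt Gc tau k e' g gx gxinf"
    and hext: "EExt Gc tau k e h hx" and KE: "EExt Gc tau k e D KE"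
    and kI: "kI \<in> LamIB Gc tau k B e"
    and fac: "\<And>z. z \<in> Ccirc e \<Longrightarrow> gx z ** h z = D z ** kI z"
  obtains hI where "hI \<in> LamIB Gc tau k B e'" "\<And>z. z \<in> Ccirc e' \<Longrightarrow> g z ** hx z = KE z ** hI z"
proof -
  obtain KI KIinf where KI: "IExt Gc tau k e kI KI KIinf" and KI0: "KI 0 \<in> B"
    using kI unfolding LamIB_def by auto
  define Q where "Q = (\<lambda>z. matrix_inv (KE z) ** (gx z ** hx z))"
  have Q_KI: "Q z = KI z" if "z \<in> Ccirc e" for z
    using quotient_on_Ccirc[where gx=gx, OF e(1) _ hext KE KI that fac[OF that]] e
    unfolding Q_def by simp
  define hI where "hI = annulus_patch e Q KI"
  have hI_C': "hI z = matrix_inv (KE z) ** (g z ** hx z)" "KE z \<in> Gc" if "z \<in> Ccirc e'" for z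
    using that Ccirc_subset_Eclos[of e e'] e gext KE
    unfolding hI_def annulus_patch_def Q_def IExt_def EExt_def by auto
  have "0 < e'" using e by simp
  have Q_twisted_real: "Q z \<in> Gc \<and> Q (omega k * z) = tau (Q z) \<and> cbar (Q z) = Q (1 / cnj z)"
    if "z \<in> Eclos e" "norm z \<le> e' \<or> 1 / e' \<le> norm z" for z
    using quotient_twisted_real[OF e(1) \<open>0 < e'\<close> gext hext KE that] unfolding Q_def .
  have "IExt Gc tau k e' hI hI KIinf"
    unfolding hI_def
    by (rule IExt_annulus_patch[OF e KI quotient_mholo[OF e gext hext KE, folded Q_def] Q_KI
          Q_twisted_real])
  moreover have "hI \<in> Lam Gc tau k e'"
  proof (rule Lam_cong[OF \<open>0 < e'\<close> _ hI_C'(1)[symmetric]])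
    show "(\<lambda>z. matrix_inv (KE z) ** (g z ** hx z)) \<in> Lam Gc tau k e'"
      using Lam_mult[OF Lam_matrix_inv[OF \<open>0 < e'\<close>] Lam_mult[OF g]]
        EExt_restrict(1)[OF KE e] EExt_restrict(1)[OF hext e]
      unfolding LamE_def by blast
  qed
  moreover have "hI 0 = KI 0" using e by (simp add: hI_def annulus_patch_def Eclos_def)
  ultimately have "hI \<in> LamIB Gc tau k B e'" using KI0 unfolding LamIB_def by auto
  moreover have "g z ** hx z = KE z ** hI z" if "z \<in> Ccirc e'" for z
    using hI_C'[OF that] by (simp add: matrix_mul_assoc matrix_inv_right Gc_invertible)
  ultimately show ?thesis using that by blast
qed

end

theorem proposition2p7:
  fixes Gc :: "'n::finite cmat set" and tau :: "'n cmat \<Rightarrow> 'n cmat" and k :: nat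
    and B :: "'n cmat set" and e e' :: real
    and g h gx hx :: "complex \<Rightarrow> 'n cmat" and gxinf :: "'n cmat"
  assumes setting: "twisted_setting Gc tau k B"
    and factorization: "unique_factorization Gc tau k B"
    and eps: "0 < e" "e < e'" "e' < 1"
    and g: "g \<in> LamI Gc tau k e'" and gext: "IExt Gc tau k e' g gx gxinf"
    and h: "h \<in> LamE Gc tau k e" and hext: "EExt Gc tau k e h hx"
  shows "dress Gc tau k B e gx h \<in> LamE Gc tau k e \<and>
         (\<exists>kx. EExt Gc tau k e (dress Gc tau k B e gx h) kx \<and>
               (\<forall>z\<in>Ccirc e'. dress Gc tau k B e' g hx z = kx z))"
proof -
  interpret twisted_loops Gc tau k B by (rule twisted_loops.intro) (rule setting)
  have "e < 1" "0 < e'" using eps by auto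
  have "(\<lambda>z. gx z ** h z) \<in> Lam Gc tau k e"
    using Lam_mult IExt_imp_Lam[OF gext eps(1,2)] h unfolding LamE_def by blast
  then obtain kI where D: "dress Gc tau k B e gx h \<in> LamE Gc tau k e" and kI: "kI \<in> LamIB Gc tau k B e"
    and fac: "\<And>z. z \<in> Ccirc e \<Longrightarrow> gx z ** h z = dress Gc tau k B e gx h z ** kI z"
    using dress_factorization[OF factorization eps(1) \<open>e < 1\<close>] by blast
  then obtain KE where KE: "EExt Gc tau k e (dress Gc tau k B e gx h) KE"
    unfolding LamE_def by auto
  have g': "g \<in> Lam Gc tau k e'" using g unfolding LamI_def by auto
  obtain hI where hI: "hI \<in> LamIB Gc tau k B e'"
    and fac': "\<And>z. z \<in> Ccirc e' \<Longrightarrow> g z ** hx z = KE z ** hI z"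
    using LamIB_factor_on_larger_circles[OF eps g' gext hext KE kI fac] by blast
  have "(\<lambda>z. g z ** hx z) \<in> Lam Gc tau k e'"
    using Lam_mult[OF g'] EExt_restrict(1)[OF hext eps] unfolding LamE_def by blast
  then have "\<forall>z\<in>Ccirc e'. dress Gc tau k B e' g hx z = KE z"
    using dress_unique[OF factorization \<open>0 < e'\<close> eps(3) _ EExt_restrict(1)[OF KE eps] hI fac'] by blast
  then show ?thesis using D KE by blast
qed

end
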